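(* Let $p$ be a prime and let $A$, $B$ be $p$-groups with $|A|=p^a$, $|B|=p^b$, $a,b\geq 1$. Let $p^d$ be the maximum order of an element of $A$. For an integer $m\ge 1$ let $s_m$ be the number of elements $g\in A$ with $g^m=1$, and for a divisor $n$ of $|B|$ let $d_n$ be the number of elements of $B$ of order $n$. For $0\le n\le b$ put $k_n=\frac{p^{-n}d_{p^{b-n}}}{a(B)}$. Then $$a(A\wr B)=p^d a(B)-(p-1)a(B)\sum_{n=0}^{b}k_n\left[\sum_{m=0}^{d-1}p^m\left(\frac{s_{p^m}}{p^a}\right)^{p^n}\right].$$ Moreover, $k_n\ge 0$ for all $n$ and $\sum_{n=0}^{b}k_n=1$.
   Context: For a finite group $G$, the average order is $a(G)=\frac{1}{|G|}\sum_{g\in G}\mathrm{order}(g)$. For groups $A,B$, let $K=\prod_{b\in B}A$, on which $B$ acts by $x\cdot(\alpha_b)_b=(\alpha_{x^{-1}b})_b$ for $x\in B$; the wreath product $A\wr B$ is the semidirect product $K\rtimes B$ for this action. *)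

theory Defs
  imports "HOL-Algebra.Algebra"
begin

definition avg_order :: "('a, 'c) monoid_scheme \<Rightarrow> real" where
  "avg_order G = (\<Sum>g\<in>carrier G. real (group.ord G g)) / real (order G)"

text \<open>Wreath product A wr B = K \<rtimes> B with K = functions carrier B \<rightarrow> carrier A,
  B acting by (x . f)(b) = f (x^-1 b); multiplication (f,x)(g,y) = (f * (x . g), x y).\<close>
definition wreath :: "('a, 'c) monoid_scheme \<Rightarrow> ('b, 'd) monoid_scheme \<Rightarrow> (('b \<Rightarrow> 'a) \<times> 'b) monoid" where
  "wreath A B = \<lparr> carrier = (carrier B \<rightarrow>\<^sub>E carrier A) \<times> carrier B,
     monoid.mult = (\<lambda>(f, x) (g, y). ((\<lambda>b\<in>carrier B. f b \<otimes>\<^bsub>A\<^esub> g (inv\<^bsub>B\<^esub> x \<otimes>\<^bsub>B\<^esub> b)), x \<otimes>\<^bsub>B\<^esub> y)),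
     one = ((\<lambda>b\<in>carrier B. \<one>\<^bsub>A\<^esub>), \<one>\<^bsub>B\<^esub>) \<rparr>"

definition pow_one_count :: "('a, 'c) monoid_scheme \<Rightarrow> nat \<Rightarrow> nat" where
  "pow_one_count A m = card {g \<in> carrier A. g [^]\<^bsub>A\<^esub> m = \<one>\<^bsub>A\<^esub>}"

definition order_count :: "('a, 'c) monoid_scheme \<Rightarrow> nat \<Rightarrow> nat" where
  "order_count B n = card {g \<in> carrier B. group.ord B g = n}"

end

theory Submission
  imports Defs
begin

(* Let (f, x) be an element of A wr B and r = ord x. Its r-th power is
   (c |-> f c * f (x^-1 c) * ... * f (x^(1-r) c), 1), so ord (f, x) = r p^k, where p^k is the
   least power of p killing all these cycle products. Replacing f at one point of every orbit
   of <x> by the cycle product through that point is a bijection of A^B, and the cycle products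
   along one orbit are conjugate; hence exactly s_q^(|B|/r) |A|^(|B| - |B|/r) functions f
   satisfy (f, x)^(r q) = 1. Writing p^k = p^d - (p - 1) (p^k + ... + p^(d-1)), summing over f
   and then over x grouped by its order gives the formula, and a(B) = sum_n d_(p^(b-n)) p^-n
   makes the k_n sum to one. *)

lemma power_eq_minus_geometric_tail:
  fixes z :: "'a::comm_ring_1"
  assumes "k \<le> d"
  shows "z ^ k = z ^ d - (z - 1) * (\<Sum>m<d. z ^ m * of_bool (k \<le> m))"
  using assms by (induction d rule: dec_induct) (simp_all add: algebra_simps)

lemma prime_power_dvd_prime_power_iff:
  fixes p :: nat
  assumes "Factorial_Ring.prime p"
  shows "p ^ i dvd p ^ j \<longleftrightarrow> i \<le> j"
  using prime_gt_1_nat[OF assms] by (simp add: dvd_power_iff)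

lemma card_PiE_constrained_on_subset:
  assumes "finite I" and "J \<subseteq> I" and "T \<subseteq> S"
  shows "card {g \<in> I \<rightarrow>\<^sub>E S. \<forall>i\<in>J. g i \<in> T} = card T ^ card J * card S ^ (card I - card J)"
proof -
  have "g i \<in> (if i \<in> J then T else S) \<longleftrightarrow> g i \<in> S \<and> (i \<in> J \<longrightarrow> g i \<in> T)" for g i
    using assms(3) by auto
  then have "{g \<in> I \<rightarrow>\<^sub>E S. \<forall>i\<in>J. g i \<in> T} = (\<Pi>\<^sub>E i\<in>I. if i \<in> J then T else S)"
    using assms(2) by (auto simp only: PiE_iff mem_Collect_eq extensional_def)
  also have "card \<dots> = (\<Prod>i\<in>I. if i \<in> J then card T else card S)"
    using assms(1) by (simp add: card_PiE if_distrib)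
  also have "\<dots> = card T ^ card J * card S ^ (card I - card J)"
    using assms(1,2) by (simp add: prod.If_cases Int_absorb1 card_Diff_subset finite_subset Diff_eq[symmetric])
  finally show ?thesis .
qed

lemma (in group) nat_pow_eq_one_swap:
  assumes u: "u \<in> carrier G" and v: "v \<in> carrier G" and uv: "(u \<otimes> v) [^] (q::nat) = \<one>"
  shows "(v \<otimes> u) [^] q = \<one>"
proof -
  have shift: "(v \<otimes> u) [^] Suc n = v \<otimes> (u \<otimes> v) [^] n \<otimes> u" for n
  proof (induction n)
    case (Suc n)
    have "(v \<otimes> u) [^] Suc (Suc n) = (v \<otimes> (u \<otimes> v) [^] n \<otimes> u) \<otimes> (v \<otimes> u)"
      using Suc by (simp only: nat_pow_Suc[of _ "Suc n"])
    also have "\<dots> = v \<otimes> ((u \<otimes> v) [^] n \<otimes> (u \<otimes> v)) \<otimes> u"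
      using u v by (simp add: m_assoc)
    finally show ?case by simp
  qed (use u v in simp)
  have "(v \<otimes> u) [^] q \<otimes> (v \<otimes> u) = \<one> \<otimes> (v \<otimes> u)"
    using shift[of q] uv u v by (simp add: m_assoc)
  then show ?thesis
    using u v by (metis m_closed nat_pow_closed one_closed r_cancel)
qed

context group
begin

lemma finite_carrier_if_order_prime_power:
  "Factorial_Ring.prime (p::nat) \<Longrightarrow> order G = p ^ n \<Longrightarrow> finite (carrier G)"
  unfolding order_def by (metis card.infinite not_prime_0 power_not_zero)

lemma ord_eq_prime_power:
  assumes p: "Factorial_Ring.prime p" and order: "order G = p ^ n" and w: "w \<in> carrier G"
  shows "\<exists>j\<le>n. ord w = p ^ j"
  using ord_dvd_group_order[OF w] divides_primepow_nat[OF p] order by simp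

lemma ord_eq_mult_prime_power:
  assumes p: "Factorial_Ring.prime p" and order: "order G = p ^ n" and w: "w \<in> carrier G"
    and r: "r dvd ord w"
  shows "\<exists>k. ord w = r * p ^ k \<and> (\<forall>m. w [^] (r * p ^ m) = \<one> \<longleftrightarrow> k \<le> m)"
proof -
  obtain j where j: "ord w = p ^ j" using ord_eq_prime_power[OF p order w] by blast
  obtain i where "i \<le> j" and i: "r = p ^ i" using r j divides_primepow_nat[OF p] by auto
  then have "ord w = r * p ^ (j - i)" using j by (simp flip: power_add)
  moreover have "w [^] (r * p ^ m) = \<one> \<longleftrightarrow> j - i \<le> m" for m
    using pow_eq_id[OF w] prime_power_dvd_prime_power_iff[OF p] \<open>i \<le> j\<close>
    by (simp add: i j power_add[symmetric]; arith)
  ultimately show ?thesis by blast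
qed

lemma pow_Max_ord_eq_one:
  assumes p: "Factorial_Ring.prime p" and order: "order G = p ^ n" and y: "y \<in> carrier G"
  shows "y [^] Max (ord ` carrier G) = \<one>"
proof -
  have fin: "finite (carrier G)" using finite_carrier_if_order_prime_power[OF p order] .
  have "Max (ord ` carrier G) \<in> ord ` carrier G" using fin y by (intro Max_in) auto
  then obtain z where z: "z \<in> carrier G" and Max: "Max (ord ` carrier G) = ord z" by auto
  obtain i where i: "ord y = p ^ i" using ord_eq_prime_power[OF p order y] by blast
  obtain e where e: "ord z = p ^ e" using ord_eq_prime_power[OF p order z] by blast
  have "ord y \<le> ord z" unfolding Max[symmetric] using fin y by (intro Max_ge) auto
  then have "i \<le> e" using i e by (metis power_le_imp_le_exp prime_gt_1_nat[OF p])
  then show ?thesis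
    using pow_eq_id[OF y] prime_power_dvd_prime_power_iff[OF p] by (simp add: Max e i)
qed

lemma sum_ord_prime_power_group:
  fixes g :: "nat \<Rightarrow> real"
  assumes p: "Factorial_Ring.prime p" and order: "order G = p ^ b"
  shows "(\<Sum>x\<in>carrier G. g (ord x)) = (\<Sum>n=0..b. real (order_count G (p ^ (b - n))) * g (p ^ (b - n)))"
proof -
  have fin: "finite (carrier G)" using finite_carrier_if_order_prime_power[OF p order] .
  have "(\<Sum>x\<in>carrier G. g (ord x)) = (\<Sum>y\<in>ord ` carrier G. \<Sum>x\<in>{x \<in> carrier G. ord x = y}. g (ord x))"
    using fin by (rule sum.image_gen)
  also have "\<dots> = (\<Sum>y\<in>ord ` carrier G. real (order_count G y) * g y)"
    unfolding order_count_def by (intro sum.cong refl) simp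
  also have "\<dots> = (\<Sum>y\<in>(\<lambda>n. p ^ (b - n)) ` {0..b}. real (order_count G y) * g y)"
  proof (rule sum.mono_neutral_left)
    show "ord ` carrier G \<subseteq> (\<lambda>n. p ^ (b - n)) ` {0..b}"
    proof
      fix y assume "y \<in> ord ` carrier G"
      then obtain j where "j \<le> b" "y = p ^ j" using ord_eq_prime_power[OF p order] by blast
      then show "y \<in> (\<lambda>n. p ^ (b - n)) ` {0..b}" by (intro image_eqI[of _ _ "b - j"]) auto
    qed
  next
    show "\<forall>y\<in>(\<lambda>n. p ^ (b - n)) ` {0..b} - ord ` carrier G. real (order_count G y) * g y = 0"
    proof
      fix y assume "y \<in> (\<lambda>n. p ^ (b - n)) ` {0..b} - ord ` carrier G"
      then have "{x \<in> carrier G. ord x = y} = {}" by blast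
      then show "real (order_count G y) * g y = 0"
        unfolding order_count_def by (simp only: card.empty of_nat_0 mult_zero_left)
    qed
  qed simp
  also have "\<dots> = (\<Sum>n=0..b. real (order_count G (p ^ (b - n))) * g (p ^ (b - n)))"
    using prime_gt_1_nat[OF p] by (intro sum.reindex_cong[OF inj_onI refl refl]) auto
  finally show ?thesis .
qed

lemma avg_order_prime_power_group:
  assumes p: "Factorial_Ring.prime p" and order: "order G = p ^ b"
  shows "avg_order G = (\<Sum>n=0..b. real (order_count G (p ^ (b - n))) / real p ^ n)"
proof -
  have "avg_order G = (\<Sum>n=0..b. real (order_count G (p ^ (b - n))) * real (p ^ (b - n))) / real p ^ b"
    unfolding avg_order_def sum_ord_prime_power_group[OF p order] order by simp
  also have "\<dots> = (\<Sum>n=0..b. real (order_count G (p ^ (b - n))) / real p ^ n)"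
    unfolding sum_divide_distrib
  proof (intro sum.cong refl)
    fix n assume "n \<in> {0..b}"
    then have "real p ^ b = real p ^ (b - n) * real p ^ n" by (simp flip: power_add)
    then show "real (order_count G (p ^ (b - n))) * real (p ^ (b - n)) / real p ^ b
        = real (order_count G (p ^ (b - n))) / real p ^ n"
      using prime_gt_0_nat[OF p] by simp
  qed
  finally show ?thesis .
qed

end

locale finite_group = group +
  assumes finite_carrier: "finite (carrier G)"
begin

lemma ord_pos: "x \<in> carrier G \<Longrightarrow> 0 < ord x"
  using ord_ge_1[OF finite_carrier] by fastforce

lemma avg_order_pos: "0 < avg_order G"
proof -
  have "0 < (\<Sum>x\<in>carrier G. real (ord x))"
    using finite_carrier ord_pos by (intro sum_pos) fastforce+
  moreover have "0 < order G" using finite_carrier unfolding order_def by (auto simp: card_gt_0_iff)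
  ultimately show ?thesis unfolding avg_order_def by simp
qed

text \<open>The right cosets of \<open>\<langle>x\<rangle>\<close> are the orbits of \<open>c \<mapsto> inv x \<otimes> c\<close>, along which the
  cycle products of the wreath product run.\<close>
definition coset_reps :: "'a \<Rightarrow> 'a set" where
  "coset_reps x = (\<lambda>C. SOME c. c \<in> C) ` (rcosets (generate G {inv x}))"

context
  fixes x assumes x: "x \<in> carrier G"
begin

lemma subgroup_generate_inv: "subgroup (generate G {inv x}) G"
  using x by (intro generate_is_subgroup) simp

lemma generate_inv_eq_powers: "generate G {inv x} = {inv x [^] k | k. k \<in> (UNIV :: nat set)}"
  using x by (intro generate_pow_on_finite_carrier[OF finite_carrier]) simp

lemma some_in_rcoset:
  assumes "C \<in> rcosets (generate G {inv x})"
  shows "(SOME c. c \<in> C) \<in> C"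
proof -
  obtain a where "a \<in> carrier G" and "C = generate G {inv x} #> a"
    using assms unfolding RCOSETS_def by blast
  then have "a \<in> C" using rcos_self[OF _ subgroup_generate_inv] by simp
  then show ?thesis by (rule someI)
qed

lemma rcoset_eq_if_some_mem:
  assumes "C \<in> rcosets (generate G {inv x})" and "C' \<in> rcosets (generate G {inv x})"
    and "(SOME c. c \<in> C) \<in> C'"
  shows "C = C'"
proof (rule ccontr)
  assume "C \<noteq> C'"
  then have "disjnt C C'"
    using rcos_disjoint[OF subgroup_generate_inv] assms(1,2) by (auto simp: pairwise_def)
  then show False using some_in_rcoset[OF assms(1)] assms(3) by (auto simp: disjnt_def)
qed

lemma coset_reps_subset: "coset_reps x \<subseteq> carrier G"
  using some_in_rcoset rcosets_part_G[OF subgroup_generate_inv] by (auto simp: coset_reps_def)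

lemma coset_reps_cover:
  assumes c: "c \<in> carrier G"
  shows "\<exists>c0\<in>coset_reps x. \<exists>k::nat. c = inv x [^] k \<otimes> c0"
proof -
  let ?H = "generate G {inv x}"
  define c0 where "c0 = (SOME c'. c' \<in> ?H #> c)"
  have "?H #> c \<in> rcosets ?H"
    using c subgroup.subset[OF subgroup_generate_inv] by (rule rcosetsI[rotated])
  then have "c0 \<in> coset_reps x" and "c0 \<in> ?H #> c"
    unfolding c0_def coset_reps_def using some_in_rcoset by auto
  then obtain h where h: "h \<in> ?H" and c0: "c0 = h \<otimes> c" unfolding r_coset_def by auto
  have "inv h \<in> ?H" using subgroup.m_inv_closed[OF subgroup_generate_inv h] .
  then obtain k :: nat where "inv h = inv x [^] k" unfolding generate_inv_eq_powers by blast
  moreover have "c = inv h \<otimes> c0"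
    using c0 h c subgroup.subset[OF subgroup_generate_inv] by (auto simp: m_assoc[symmetric])
  ultimately show ?thesis using \<open>c0 \<in> coset_reps x\<close> by auto
qed

lemma coset_reps_avoid:
  assumes c0: "c0 \<in> coset_reps x" and i: "0 < i" "i < ord x"
  shows "inv x [^] i \<otimes> c0 \<notin> coset_reps x"
proof
  let ?H = "generate G {inv x}"
  assume "inv x [^] i \<otimes> c0 \<in> coset_reps x"
  then obtain C' where C': "C' \<in> rcosets ?H" and y: "inv x [^] i \<otimes> c0 = (SOME c. c \<in> C')"
    unfolding coset_reps_def by blast
  obtain C where C: "C \<in> rcosets ?H" and c0C: "c0 = (SOME c. c \<in> C)"
    using c0 unfolding coset_reps_def by blast
  have c0G: "c0 \<in> carrier G" using c0 coset_reps_subset by blast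
  have "C = ?H #> c0"
    using C some_in_rcoset[OF C] repr_independence[OF _ _ subgroup_generate_inv]
    by (auto simp: RCOSETS_def c0C)
  moreover have "inv x [^] i \<in> ?H" unfolding generate_inv_eq_powers by blast
  ultimately have "inv x [^] i \<otimes> c0 \<in> C"
    using rcosI[OF _ subgroup.subset[OF subgroup_generate_inv] c0G] by blast
  then have "C' = C" using rcoset_eq_if_some_mem[OF C' C] y by simp
  then have "inv x [^] i \<otimes> c0 = \<one> \<otimes> c0" using y c0C c0G by simp
  then have "inv x [^] i = \<one>" using x c0G by (metis inv_closed nat_pow_closed one_closed r_cancel)
  then have "ord x dvd i" using x pow_eq_id[of "inv x" i] by simp
  then show False using i by (simp add: nat_dvd_not_less)
qed

lemma card_coset_reps: "card (coset_reps x) * ord x = order G"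
proof -
  have "inj_on (\<lambda>C. SOME c. c \<in> C) (rcosets (generate G {inv x}))"
  proof (rule inj_onI)
    fix C C' assume "C \<in> rcosets (generate G {inv x})" "C' \<in> rcosets (generate G {inv x})"
      and "(SOME c. c \<in> C) = (SOME c. c \<in> C')"
    then show "C = C'" using some_in_rcoset[of C'] by (intro rcoset_eq_if_some_mem) auto
  qed
  then have "card (coset_reps x) = card (rcosets (generate G {inv x}))"
    unfolding coset_reps_def by (rule card_image)
  moreover have "card (generate G {inv x}) = ord x"
    using x generate_pow_card[of "inv x"] by simp
  ultimately show ?thesis using lagrange[OF subgroup_generate_inv] by simp
qed

end

end

lemma wreath_carrier: "carrier (wreath A B) = (carrier B \<rightarrow>\<^sub>E carrier A) \<times> carrier B"
  by (simp add: wreath_def)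

lemma wreath_mult: "(f, x) \<otimes>\<^bsub>wreath A B\<^esub> (g, y) =
   ((\<lambda>b\<in>carrier B. f b \<otimes>\<^bsub>A\<^esub> g (inv\<^bsub>B\<^esub> x \<otimes>\<^bsub>B\<^esub> b)), x \<otimes>\<^bsub>B\<^esub> y)"
  by (simp add: wreath_def)

lemma wreath_one: "\<one>\<^bsub>wreath A B\<^esub> = ((\<lambda>b\<in>carrier B. \<one>\<^bsub>A\<^esub>), \<one>\<^bsub>B\<^esub>)"
  by (simp add: wreath_def)

lemma group_wreath:
  assumes "group A" and "group B"
  shows "group (wreath A B)"
proof -
  interpret A: group A by fact
  interpret B: group B by fact
  show ?thesis
  proof (rule groupI)
    show "u \<otimes>\<^bsub>wreath A B\<^esub> v \<in> carrier (wreath A B)"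
      if "u \<in> carrier (wreath A B)" "v \<in> carrier (wreath A B)" for u v
      using that by (auto simp: wreath_carrier wreath_mult PiE_iff)
    show "\<one>\<^bsub>wreath A B\<^esub> \<in> carrier (wreath A B)"
      by (auto simp: wreath_carrier wreath_one)
    show "u \<otimes>\<^bsub>wreath A B\<^esub> v \<otimes>\<^bsub>wreath A B\<^esub> w = u \<otimes>\<^bsub>wreath A B\<^esub> (v \<otimes>\<^bsub>wreath A B\<^esub> w)"
      if "u \<in> carrier (wreath A B)" "v \<in> carrier (wreath A B)" "w \<in> carrier (wreath A B)" for u v w
      using that by (auto simp: wreath_carrier wreath_mult PiE_iff B.m_assoc B.inv_mult_group A.m_assoc intro!: restrict_ext)
    show "\<one>\<^bsub>wreath A B\<^esub> \<otimes>\<^bsub>wreath A B\<^esub> u = u" if "u \<in> carrier (wreath A B)" for u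
      using that by (auto simp: wreath_carrier wreath_mult wreath_one PiE_iff extensional_def fun_eq_iff)
    show "\<exists>v\<in>carrier (wreath A B). v \<otimes>\<^bsub>wreath A B\<^esub> u = \<one>\<^bsub>wreath A B\<^esub>"
      if u_carrier: "u \<in> carrier (wreath A B)" for u
    proof -
      obtain f x where u: "u = (f, x)" "f \<in> carrier B \<rightarrow>\<^sub>E carrier A" "x \<in> carrier B"
        using u_carrier unfolding wreath_carrier by blast
      show ?thesis
      proof
        show "((\<lambda>b\<in>carrier B. inv\<^bsub>A\<^esub> f (x \<otimes>\<^bsub>B\<^esub> b)), inv\<^bsub>B\<^esub> x) \<otimes>\<^bsub>wreath A B\<^esub> u = \<one>\<^bsub>wreath A B\<^esub>"
          using u by (auto simp: wreath_mult wreath_one PiE_iff B.m_assoc[symmetric] intro!: restrict_ext)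
      qed (use u in \<open>auto simp: wreath_carrier PiE_iff\<close>)
    qed
  qed
qed

locale wreath_product = A: group A + B: group B
  for A :: "('a, 'c) monoid_scheme" and B :: "('b, 'e) monoid_scheme"
begin

sublocale W: group "wreath A B"
  by (rule group_wreath) unfold_locales

primrec cycle_prod :: "('b \<Rightarrow> 'a) \<Rightarrow> 'b \<Rightarrow> nat \<Rightarrow> 'b \<Rightarrow> 'a" where
  "cycle_prod f x 0 c = \<one>\<^bsub>A\<^esub>"
| "cycle_prod f x (Suc n) c = f c \<otimes>\<^bsub>A\<^esub> cycle_prod f x n (inv\<^bsub>B\<^esub> x \<otimes>\<^bsub>B\<^esub> c)"

lemma cycle_prod_one:
  assumes "F \<in> carrier B \<rightarrow>\<^sub>E carrier A" and "c \<in> carrier B"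
  shows "cycle_prod F \<one>\<^bsub>B\<^esub> q c = F c [^]\<^bsub>A\<^esub> q"
proof (induction q)
  case (Suc q)
  have "F c \<in> carrier A" using assms by (rule PiE_mem)
  then show ?case using Suc assms(2) by (simp flip: A.nat_pow_Suc2)
qed simp

context
  fixes f x
  assumes f: "f \<in> carrier B \<rightarrow>\<^sub>E carrier A" and x: "x \<in> carrier B"
begin

lemma cycle_prod_closed: "c \<in> carrier B \<Longrightarrow> cycle_prod f x n c \<in> carrier A"
  by (induction n arbitrary: c) (simp_all add: PiE_mem[OF f] x)

lemma cycle_prod_Suc_right:
  "c \<in> carrier B \<Longrightarrow> cycle_prod f x (Suc n) c = cycle_prod f x n c \<otimes>\<^bsub>A\<^esub> f (inv\<^bsub>B\<^esub> x [^]\<^bsub>B\<^esub> n \<otimes>\<^bsub>B\<^esub> c)"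
proof (induction n arbitrary: c)
  case (Suc n)
  have c': "inv\<^bsub>B\<^esub> x \<otimes>\<^bsub>B\<^esub> c \<in> carrier B" using x Suc.prems by simp
  have orbit: "inv\<^bsub>B\<^esub> x [^]\<^bsub>B\<^esub> n \<otimes>\<^bsub>B\<^esub> (inv\<^bsub>B\<^esub> x \<otimes>\<^bsub>B\<^esub> c) = inv\<^bsub>B\<^esub> x [^]\<^bsub>B\<^esub> Suc n \<otimes>\<^bsub>B\<^esub> c"
    using x Suc.prems by (simp add: B.m_assoc)
  have "cycle_prod f x (Suc (Suc n)) c
      = f c \<otimes>\<^bsub>A\<^esub> (cycle_prod f x n (inv\<^bsub>B\<^esub> x \<otimes>\<^bsub>B\<^esub> c) \<otimes>\<^bsub>A\<^esub> f (inv\<^bsub>B\<^esub> x [^]\<^bsub>B\<^esub> Suc n \<otimes>\<^bsub>B\<^esub> c))"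
    using Suc.IH[OF c'] orbit by simp
  also have "\<dots> = cycle_prod f x (Suc n) c \<otimes>\<^bsub>A\<^esub> f (inv\<^bsub>B\<^esub> x [^]\<^bsub>B\<^esub> Suc n \<otimes>\<^bsub>B\<^esub> c)"
    using Suc.prems x c' by (simp add: A.m_assoc PiE_mem[OF f] cycle_prod_closed)
  finally show ?case .
qed (simp add: PiE_mem[OF f])

lemma wreath_nat_pow:
  "(f, x) [^]\<^bsub>wreath A B\<^esub> n = ((\<lambda>c\<in>carrier B. cycle_prod f x n c), x [^]\<^bsub>B\<^esub> n)"
proof (induction n)
  case 0
  show ?case by (simp add: wreath_one restrict_def)
next
  case (Suc n)
  have "inv\<^bsub>B\<^esub> (x [^]\<^bsub>B\<^esub> n) = inv\<^bsub>B\<^esub> x [^]\<^bsub>B\<^esub> n"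
    using x by (simp add: B.nat_pow_inv)
  then show ?case
    unfolding W.nat_pow_Suc Suc wreath_mult
    by (intro arg_cong2[where f = Pair] restrict_ext) (simp_all add: cycle_prod_Suc_right del: cycle_prod.simps)
qed

lemma cycle_prod_rotate:
  assumes r: "x [^]\<^bsub>B\<^esub> r = \<one>\<^bsub>B\<^esub>" "0 < r" and c: "c \<in> carrier B"
  shows "\<exists>u\<in>carrier A. \<exists>v\<in>carrier A.
    cycle_prod f x r c = v \<otimes>\<^bsub>A\<^esub> u \<and> cycle_prod f x r (inv\<^bsub>B\<^esub> x \<otimes>\<^bsub>B\<^esub> c) = u \<otimes>\<^bsub>A\<^esub> v"
proof -
  obtain r' where r': "r = Suc r'" using r(2) by (cases r) auto
  have c': "inv\<^bsub>B\<^esub> x \<otimes>\<^bsub>B\<^esub> c \<in> carrier B" using x c by simp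
  have "inv\<^bsub>B\<^esub> x [^]\<^bsub>B\<^esub> r' \<otimes>\<^bsub>B\<^esub> (inv\<^bsub>B\<^esub> x \<otimes>\<^bsub>B\<^esub> c) = inv\<^bsub>B\<^esub> x [^]\<^bsub>B\<^esub> r \<otimes>\<^bsub>B\<^esub> c"
    using x c r' by (simp add: B.m_assoc)
  also have "\<dots> = c" using x c r(1) by (simp add: B.nat_pow_inv)
  finally have "cycle_prod f x r (inv\<^bsub>B\<^esub> x \<otimes>\<^bsub>B\<^esub> c) = cycle_prod f x r' (inv\<^bsub>B\<^esub> x \<otimes>\<^bsub>B\<^esub> c) \<otimes>\<^bsub>A\<^esub> f c"
    using cycle_prod_Suc_right[OF c'] r' by simp
  moreover have "cycle_prod f x r c = f c \<otimes>\<^bsub>A\<^esub> cycle_prod f x r' (inv\<^bsub>B\<^esub> x \<otimes>\<^bsub>B\<^esub> c)"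
    using r' by simp
  ultimately show ?thesis
    using cycle_prod_closed[OF c'] PiE_mem[OF f c] by blast
qed

lemma cycle_prod_pow_eq_one_shift:
  assumes r: "x [^]\<^bsub>B\<^esub> r = \<one>\<^bsub>B\<^esub>" "0 < r" and c: "c \<in> carrier B"
  shows "cycle_prod f x r (inv\<^bsub>B\<^esub> x [^]\<^bsub>B\<^esub> (k::nat) \<otimes>\<^bsub>B\<^esub> c) [^]\<^bsub>A\<^esub> q = \<one>\<^bsub>A\<^esub>
     \<longleftrightarrow> cycle_prod f x r c [^]\<^bsub>A\<^esub> (q::nat) = \<one>\<^bsub>A\<^esub>"
proof (induction k)
  case (Suc k)
  have ck: "inv\<^bsub>B\<^esub> x [^]\<^bsub>B\<^esub> k \<otimes>\<^bsub>B\<^esub> c \<in> carrier B" using x c by simp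
  have "inv\<^bsub>B\<^esub> x [^]\<^bsub>B\<^esub> Suc k \<otimes>\<^bsub>B\<^esub> c = inv\<^bsub>B\<^esub> x \<otimes>\<^bsub>B\<^esub> (inv\<^bsub>B\<^esub> x [^]\<^bsub>B\<^esub> k \<otimes>\<^bsub>B\<^esub> c)"
    by (simp only: B.nat_pow_Suc2[OF B.inv_closed[OF x]]) (simp add: B.m_assoc x c)
  then show ?case
    using Suc cycle_prod_rotate[OF r ck] A.nat_pow_eq_one_swap by metis
qed (use c in simp)

end

lemma cycle_prod_cong:
  assumes f: "f \<in> carrier B \<rightarrow>\<^sub>E carrier A" and g: "g \<in> carrier B \<rightarrow>\<^sub>E carrier A"
    and x: "x \<in> carrier B" and c: "c \<in> carrier B"
    and fg: "\<And>i. i < n \<Longrightarrow> f (inv\<^bsub>B\<^esub> x [^]\<^bsub>B\<^esub> i \<otimes>\<^bsub>B\<^esub> c) = g (inv\<^bsub>B\<^esub> x [^]\<^bsub>B\<^esub> i \<otimes>\<^bsub>B\<^esub> c)"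
  shows "cycle_prod f x n c = cycle_prod g x n c"
  using fg by (induction n) (simp_all add: cycle_prod_Suc_right[OF f x c] cycle_prod_Suc_right[OF g x c]
      del: cycle_prod.simps(2))

lemma wreath_pow_mult:
  assumes f: "f \<in> carrier B \<rightarrow>\<^sub>E carrier A" and x: "x \<in> carrier B" and r: "x [^]\<^bsub>B\<^esub> r = \<one>\<^bsub>B\<^esub>"
  shows "(f, x) [^]\<^bsub>wreath A B\<^esub> (r * q) = ((\<lambda>c\<in>carrier B. cycle_prod f x r c [^]\<^bsub>A\<^esub> q), \<one>\<^bsub>B\<^esub>)"
proof -
  let ?F = "\<lambda>c\<in>carrier B. cycle_prod f x r c"
  have F: "?F \<in> carrier B \<rightarrow>\<^sub>E carrier A" using cycle_prod_closed[OF f x] by simp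
  have "(f, x) [^]\<^bsub>wreath A B\<^esub> (r * q) = ((f, x) [^]\<^bsub>wreath A B\<^esub> r) [^]\<^bsub>wreath A B\<^esub> q"
    using f x by (simp add: W.nat_pow_pow wreath_carrier)
  also have "\<dots> = (?F, \<one>\<^bsub>B\<^esub>) [^]\<^bsub>wreath A B\<^esub> q" using wreath_nat_pow[OF f x] r by simp
  also have "\<dots> = ((\<lambda>c\<in>carrier B. cycle_prod ?F \<one>\<^bsub>B\<^esub> q c), \<one>\<^bsub>B\<^esub>)"
    using wreath_nat_pow[OF F B.one_closed] by simp
  also have "(\<lambda>c\<in>carrier B. cycle_prod ?F \<one>\<^bsub>B\<^esub> q c) = (\<lambda>c\<in>carrier B. cycle_prod f x r c [^]\<^bsub>A\<^esub> q)"
    by (rule restrict_ext) (simp add: cycle_prod_one[OF F])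
  finally show ?thesis .
qed

lemma wreath_pow_mult_eq_one_iff:
  assumes "f \<in> carrier B \<rightarrow>\<^sub>E carrier A" and "x \<in> carrier B" and "x [^]\<^bsub>B\<^esub> r = \<one>\<^bsub>B\<^esub>"
  shows "(f, x) [^]\<^bsub>wreath A B\<^esub> (r * q) = \<one>\<^bsub>wreath A B\<^esub>
    \<longleftrightarrow> (\<forall>c\<in>carrier B. cycle_prod f x r c [^]\<^bsub>A\<^esub> q = \<one>\<^bsub>A\<^esub>)"
  unfolding wreath_pow_mult[OF assms] wreath_one
  by (auto simp: restrict_def fun_eq_iff split: if_splits)

end

locale finite_wreath_product = wreath_product A B + A: finite_group A + B: finite_group B
  for A :: "('a, 'c) monoid_scheme" and B :: "('b, 'e) monoid_scheme"
begin

text \<open>Replacing \<open>f\<close> at one point of every orbit of \<open>x\<close> by the cycle product through that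
  point is a bijection of \<open>carrier B \<rightarrow>\<^sub>E carrier A\<close>: the old value is recovered from the
  cycle product and the values of \<open>f\<close> at the other points of the orbit.\<close>
definition collapse_cycles :: "'b \<Rightarrow> ('b \<Rightarrow> 'a) \<Rightarrow> 'b \<Rightarrow> 'a" where
  "collapse_cycles x f =
    (\<lambda>y\<in>carrier B. if y \<in> B.coset_reps x then cycle_prod f x (B.ord x) y else f y)"

context
  fixes x assumes x: "x \<in> carrier B"
begin

lemma collapse_cycles_PiE:
  "f \<in> carrier B \<rightarrow>\<^sub>E carrier A \<Longrightarrow> collapse_cycles x f \<in> carrier B \<rightarrow>\<^sub>E carrier A"
  by (auto simp: collapse_cycles_def cycle_prod_closed x PiE_mem)

lemma inj_on_collapse_cycles: "inj_on (collapse_cycles x) (carrier B \<rightarrow>\<^sub>E carrier A)"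
proof (rule inj_onI)
  fix f g assume f: "f \<in> carrier B \<rightarrow>\<^sub>E carrier A" and g: "g \<in> carrier B \<rightarrow>\<^sub>E carrier A"
    and eq: "collapse_cycles x f = collapse_cycles x g"
  have pointwise: "(if y \<in> B.coset_reps x then cycle_prod f x (B.ord x) y else f y)
      = (if y \<in> B.coset_reps x then cycle_prod g x (B.ord x) y else g y)" if "y \<in> carrier B" for y
    using fun_cong[OF eq, of y] that by (simp add: collapse_cycles_def)
  obtain r where r: "B.ord x = Suc r" using B.ord_pos[OF x] by (cases "B.ord x") auto
  show "f = g"
  proof (rule PiE_ext[OF f g])
    fix c assume c: "c \<in> carrier B"
    show "f c = g c"
    proof (cases "c \<in> B.coset_reps x")
      case False
      then show ?thesis using pointwise[OF c] by simp
    next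
      case True
      have c': "inv\<^bsub>B\<^esub> x \<otimes>\<^bsub>B\<^esub> c \<in> carrier B" using x c by simp
      have rest: "cycle_prod f x r (inv\<^bsub>B\<^esub> x \<otimes>\<^bsub>B\<^esub> c) = cycle_prod g x r (inv\<^bsub>B\<^esub> x \<otimes>\<^bsub>B\<^esub> c)"
      proof (rule cycle_prod_cong[OF f g x c'])
        fix i assume "i < r"
        then have "inv\<^bsub>B\<^esub> x [^]\<^bsub>B\<^esub> Suc i \<otimes>\<^bsub>B\<^esub> c \<notin> B.coset_reps x"
          using B.coset_reps_avoid[OF x True, of "Suc i"] r by simp
        moreover have "inv\<^bsub>B\<^esub> x [^]\<^bsub>B\<^esub> i \<otimes>\<^bsub>B\<^esub> (inv\<^bsub>B\<^esub> x \<otimes>\<^bsub>B\<^esub> c) = inv\<^bsub>B\<^esub> x [^]\<^bsub>B\<^esub> Suc i \<otimes>\<^bsub>B\<^esub> c"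
          using x c by (simp add: B.m_assoc)
        ultimately show "f (inv\<^bsub>B\<^esub> x [^]\<^bsub>B\<^esub> i \<otimes>\<^bsub>B\<^esub> (inv\<^bsub>B\<^esub> x \<otimes>\<^bsub>B\<^esub> c))
            = g (inv\<^bsub>B\<^esub> x [^]\<^bsub>B\<^esub> i \<otimes>\<^bsub>B\<^esub> (inv\<^bsub>B\<^esub> x \<otimes>\<^bsub>B\<^esub> c))"
          using pointwise[of "inv\<^bsub>B\<^esub> x [^]\<^bsub>B\<^esub> Suc i \<otimes>\<^bsub>B\<^esub> c"] x c by simp
      qed
      have "f c \<otimes>\<^bsub>A\<^esub> cycle_prod f x r (inv\<^bsub>B\<^esub> x \<otimes>\<^bsub>B\<^esub> c) = g c \<otimes>\<^bsub>A\<^esub> cycle_prod f x r (inv\<^bsub>B\<^esub> x \<otimes>\<^bsub>B\<^esub> c)"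
        using pointwise[OF c] True r rest by simp
      then show ?thesis
        using A.r_cancel PiE_mem[OF f c] PiE_mem[OF g c] cycle_prod_closed[OF f x c'] by blast
    qed
  qed
qed

lemma collapse_cycles_image:
  "collapse_cycles x ` (carrier B \<rightarrow>\<^sub>E carrier A) = carrier B \<rightarrow>\<^sub>E carrier A"
  using collapse_cycles_PiE inj_on_collapse_cycles A.finite_carrier B.finite_carrier
  by (intro endo_inj_surj) (auto simp: finite_PiE)

lemma wreath_pow_ord_mult_eq_one_iff_collapse:
  assumes f: "f \<in> carrier B \<rightarrow>\<^sub>E carrier A"
  shows "(f, x) [^]\<^bsub>wreath A B\<^esub> (B.ord x * q) = \<one>\<^bsub>wreath A B\<^esub>
    \<longleftrightarrow> (\<forall>c\<in>B.coset_reps x. collapse_cycles x f c [^]\<^bsub>A\<^esub> q = \<one>\<^bsub>A\<^esub>)"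
proof -
  have r: "x [^]\<^bsub>B\<^esub> B.ord x = \<one>\<^bsub>B\<^esub>" "0 < B.ord x" using x B.ord_pos by auto
  have "(\<forall>c\<in>carrier B. cycle_prod f x (B.ord x) c [^]\<^bsub>A\<^esub> q = \<one>\<^bsub>A\<^esub>)
      \<longleftrightarrow> (\<forall>c\<in>B.coset_reps x. cycle_prod f x (B.ord x) c [^]\<^bsub>A\<^esub> q = \<one>\<^bsub>A\<^esub>)"
    (is "(\<forall>c\<in>carrier B. ?P c) \<longleftrightarrow> (\<forall>c\<in>B.coset_reps x. ?P c)")
  proof
    assume "\<forall>c\<in>carrier B. ?P c"
    then show "\<forall>c\<in>B.coset_reps x. ?P c" using B.coset_reps_subset[OF x] by blast
  next
    assume reps: "\<forall>c\<in>B.coset_reps x. ?P c"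
    show "\<forall>c\<in>carrier B. ?P c"
    proof
      fix c assume "c \<in> carrier B"
      then obtain c0 and k :: nat where c0: "c0 \<in> B.coset_reps x" and c: "c = inv\<^bsub>B\<^esub> x [^]\<^bsub>B\<^esub> k \<otimes>\<^bsub>B\<^esub> c0"
        using B.coset_reps_cover[OF x] by blast
      have "c0 \<in> carrier B" using c0 B.coset_reps_subset[OF x] by blast
      then show "?P c" using reps c0 c cycle_prod_pow_eq_one_shift[OF f x r] by simp
    qed
  qed
  moreover have "collapse_cycles x f c = cycle_prod f x (B.ord x) c" if "c \<in> B.coset_reps x" for c
    using that B.coset_reps_subset[OF x] by (auto simp: collapse_cycles_def)
  ultimately show ?thesis
    using wreath_pow_mult_eq_one_iff[OF f x r(1)] by simp
qed

lemma card_wreath_pow_ord_mult_eq_one: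
  "card {f \<in> carrier B \<rightarrow>\<^sub>E carrier A. (f, x) [^]\<^bsub>wreath A B\<^esub> (B.ord x * q) = \<one>\<^bsub>wreath A B\<^esub>}
    = pow_one_count A q ^ (order B div B.ord x) * order A ^ (order B - order B div B.ord x)"
proof -
  let ?P = "carrier B \<rightarrow>\<^sub>E carrier A"
  let ?Q = "\<lambda>g. \<forall>c\<in>B.coset_reps x. g c \<in> {a \<in> carrier A. a [^]\<^bsub>A\<^esub> q = \<one>\<^bsub>A\<^esub>}"
  have "(f, x) [^]\<^bsub>wreath A B\<^esub> (B.ord x * q) = \<one>\<^bsub>wreath A B\<^esub> \<longleftrightarrow> ?Q (collapse_cycles x f)"
    if f: "f \<in> ?P" for f
    using wreath_pow_ord_mult_eq_one_iff_collapse[OF f] PiE_mem[OF collapse_cycles_PiE[OF f]]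
      B.coset_reps_subset[OF x] by auto
  then have fibre_eq: "{f \<in> ?P. (f, x) [^]\<^bsub>wreath A B\<^esub> (B.ord x * q) = \<one>\<^bsub>wreath A B\<^esub>}
      = {f \<in> ?P. ?Q (collapse_cycles x f)}"
    by auto
  have "card {f \<in> ?P. (f, x) [^]\<^bsub>wreath A B\<^esub> (B.ord x * q) = \<one>\<^bsub>wreath A B\<^esub>}
      = card (collapse_cycles x ` {f \<in> ?P. ?Q (collapse_cycles x f)})"
    unfolding fibre_eq by (intro card_image[symmetric] inj_on_subset[OF inj_on_collapse_cycles]) auto
  also have "collapse_cycles x ` {f \<in> ?P. ?Q (collapse_cycles x f)} = {g \<in> collapse_cycles x ` ?P. ?Q g}"
    by auto
  also have "\<dots> = {g \<in> ?P. ?Q g}"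
    by (simp only: collapse_cycles_image)
  also have "card \<dots> = pow_one_count A q ^ card (B.coset_reps x) * order A ^ (order B - card (B.coset_reps x))"
    unfolding pow_one_count_def order_def
    using B.finite_carrier B.coset_reps_subset[OF x]
    by (intro card_PiE_constrained_on_subset) auto
  also have "card (B.coset_reps x) = order B div B.ord x"
    using B.card_coset_reps[OF x] B.ord_pos[OF x] by (metis nonzero_mult_div_cancel_right not_gr0)
  finally show ?thesis .
qed

end

end

context finite_wreath_product
begin

lemma order_wreath: "order (wreath A B) = order A ^ order B * order B"
  unfolding order_def wreath_carrier using B.finite_carrier by (simp add: card_cartesian_product card_PiE)

context
  fixes p a b d :: nat
  assumes p: "Factorial_Ring.prime p" and order_A: "order A = p ^ a" and order_B: "order B = p ^ b"
    and exponent_A: "\<And>y. y \<in> carrier A \<Longrightarrow> y [^]\<^bsub>A\<^esub> (p ^ d) = \<one>\<^bsub>A\<^esub>"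
begin

lemma ord_wreath_eq:
  assumes f: "f \<in> carrier B \<rightarrow>\<^sub>E carrier A" and x: "x \<in> carrier B"
  shows "real (W.ord (f, x)) = real (B.ord x) * (real p ^ d - (real p - 1) *
    (\<Sum>m<d. real p ^ m * of_bool ((f, x) [^]\<^bsub>wreath A B\<^esub> (B.ord x * p ^ m) = \<one>\<^bsub>wreath A B\<^esub>)))"
proof -
  have fx: "(f, x) \<in> carrier (wreath A B)" using f x by (simp add: wreath_carrier)
  have order_W: "order (wreath A B) = p ^ (a * p ^ b + b)"
    by (simp add: order_wreath order_A order_B power_mult power_add)
  have "(f, x) [^]\<^bsub>wreath A B\<^esub> W.ord (f, x) = \<one>\<^bsub>wreath A B\<^esub>" using fx by simp
  then have "x [^]\<^bsub>B\<^esub> W.ord (f, x) = \<one>\<^bsub>B\<^esub>" by (simp add: wreath_nat_pow[OF f x] wreath_one)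
  then have "B.ord x dvd W.ord (f, x)" using B.pow_eq_id[OF x] by simp
  then obtain k where k: "W.ord (f, x) = B.ord x * p ^ k"
    and pow_eq_one: "\<And>m. (f, x) [^]\<^bsub>wreath A B\<^esub> (B.ord x * p ^ m) = \<one>\<^bsub>wreath A B\<^esub> \<longleftrightarrow> k \<le> m"
    using W.ord_eq_mult_prime_power[OF p order_W fx] by blast
  have "(f, x) [^]\<^bsub>wreath A B\<^esub> (B.ord x * p ^ d) = \<one>\<^bsub>wreath A B\<^esub>"
    using wreath_pow_mult_eq_one_iff[OF f x B.pow_ord_eq_1[OF x]] cycle_prod_closed[OF f x]
      exponent_A by blast
  then have "k \<le> d" using pow_eq_one by blast
  then show ?thesis
    unfolding k pow_eq_one using power_eq_minus_geometric_tail[of k d "real p"] by simp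
qed

lemma sum_ord_wreath_fibre:
  assumes x: "x \<in> carrier B"
  shows "(\<Sum>f\<in>carrier B \<rightarrow>\<^sub>E carrier A. real (W.ord (f, x)))
    = (real p ^ a) ^ p ^ b * real (B.ord x) * (real p ^ d - (real p - 1) *
      (\<Sum>m<d. real p ^ m * (real (pow_one_count A (p ^ m)) / real p ^ a) ^ (p ^ b div B.ord x)))"
proof -
  let ?P = "carrier B \<rightarrow>\<^sub>E carrier A"
  let ?N = "(real p ^ a) ^ p ^ b"
  let ?R = "p ^ b div B.ord x"
  have fin: "finite ?P" using A.finite_carrier B.finite_carrier by (simp add: finite_PiE)
  have card_P: "real (card ?P) = ?N"
    using B.finite_carrier by (simp add: card_PiE order_A order_B flip: order_def)
  have "?R \<le> p ^ b" by simp
  then have N_split: "?N = (real p ^ a) ^ ?R * (real p ^ a) ^ (p ^ b - ?R)"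
    by (simp flip: power_add)
  have count: "(\<Sum>f\<in>?P. of_bool ((f, x) [^]\<^bsub>wreath A B\<^esub> (B.ord x * p ^ m) = \<one>\<^bsub>wreath A B\<^esub>))
      = ?N * (real (pow_one_count A (p ^ m)) / real p ^ a) ^ ?R" for m
    using fin card_wreath_pow_ord_mult_eq_one[OF x, of "p ^ m"] prime_gt_0_nat[OF p]
    by (simp add: Int_def order_A order_B N_split power_divide)
  have "(\<Sum>f\<in>?P. real (W.ord (f, x))) = real (card ?P) * (real (B.ord x) * real p ^ d)
      - (real p - 1) * real (B.ord x) * (\<Sum>m<d. real p ^ m *
        (\<Sum>f\<in>?P. of_bool ((f, x) [^]\<^bsub>wreath A B\<^esub> (B.ord x * p ^ m) = \<one>\<^bsub>wreath A B\<^esub>)))"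
    by (simp add: ord_wreath_eq x sum_subtractf sum.distrib sum_distrib_left sum.swap[of _ ?P] algebra_simps
        del: sum_of_bool_eq sum_mult_of_bool_eq)
  also have "\<dots> = ?N * real (B.ord x) * (real p ^ d - (real p - 1) *
      (\<Sum>m<d. real p ^ m * (real (pow_one_count A (p ^ m)) / real p ^ a) ^ ?R))"
    by (simp add: count card_P sum_distrib_left algebra_simps del: sum_of_bool_eq)
  finally show ?thesis .
qed

lemma avg_order_wreath:
  "avg_order (wreath A B) = (\<Sum>n=0..b. real (order_count B (p ^ (b - n))) / real p ^ n *
    (real p ^ d - (real p - 1) *
      (\<Sum>m<d. real p ^ m * (real (pow_one_count A (p ^ m)) / real p ^ a) ^ (p ^ n))))"
proof -
  let ?N = "(real p ^ a) ^ p ^ b"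
  define h where "h r = real r * (real p ^ d - (real p - 1) *
      (\<Sum>m<d. real p ^ m * (real (pow_one_count A (p ^ m)) / real p ^ a) ^ (p ^ b div r)))" for r
  have "(\<Sum>u\<in>carrier (wreath A B). real (W.ord u))
      = (\<Sum>f\<in>carrier B \<rightarrow>\<^sub>E carrier A. \<Sum>x\<in>carrier B. real (W.ord (f, x)))"
    unfolding wreath_carrier by (simp add: sum.cartesian_product case_prod_unfold)
  also have "\<dots> = (\<Sum>x\<in>carrier B. \<Sum>f\<in>carrier B \<rightarrow>\<^sub>E carrier A. real (W.ord (f, x)))"
    by (rule sum.swap)
  also have "\<dots> = ?N * (\<Sum>x\<in>carrier B. h (B.ord x))"
    by (simp add: sum_ord_wreath_fibre h_def sum_distrib_left mult.assoc)
  also have "\<dots> = ?N * (\<Sum>n=0..b. real (order_count B (p ^ (b - n))) * h (p ^ (b - n)))"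
    by (simp add: B.sum_ord_prime_power_group[OF p order_B])
  finally have sum_ord: "(\<Sum>u\<in>carrier (wreath A B). real (W.ord u)) = \<dots>" .
  have summand: "real (order_count B (p ^ (b - n))) * h (p ^ (b - n)) / real p ^ b
      = real (order_count B (p ^ (b - n))) / real p ^ n * (real p ^ d - (real p - 1) *
        (\<Sum>m<d. real p ^ m * (real (pow_one_count A (p ^ m)) / real p ^ a) ^ (p ^ n)))"
    if "n \<le> b" for n
  proof -
    have split: "p ^ b = p ^ (b - n) * p ^ n" using that by (simp flip: power_add)
    then have "p ^ b div p ^ (b - n) = p ^ n" using prime_gt_0_nat[OF p] by simp
    moreover have "real p ^ b = real p ^ (b - n) * real p ^ n" using split by (metis of_nat_mult of_nat_power)
    ultimately show ?thesis using prime_gt_0_nat[OF p] by (simp add: h_def)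
  qed
  have "real (order (wreath A B)) = ?N * real p ^ b"
    by (simp add: order_wreath order_A order_B)
  then show ?thesis
    unfolding avg_order_def sum_ord using prime_gt_0_nat[OF p]
    by (simp add: sum_divide_distrib summand)
qed

end

end

theorem theorem2:
  fixes A :: "('a, 'c) monoid_scheme" and B :: "('b, 'e) monoid_scheme"
    and p a b d :: nat
  assumes "Factorial_Ring.prime p"
    and "group A" and "group B"
    and "order A = p ^ a" and "order B = p ^ b"
    and "a \<ge> 1" and "b \<ge> 1"
    and "p ^ d = Max (group.ord A ` carrier A)"
  shows "let k = (\<lambda>n::nat. (real (order_count B (p ^ (b - n))) / real p ^ n) / avg_order B) in
     avg_order (wreath A B) =
       real p ^ d * avg_order B
       - (real p - 1) * avg_order B *
         (\<Sum>n = 0..b. k n * (\<Sum>m = 0..<d. real p ^ m *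
             (real (pow_one_count A (p ^ m)) / real p ^ a) ^ (p ^ n)))
     \<and> (\<forall>n\<le>b. k n \<ge> 0) \<and> (\<Sum>n = 0..b. k n) = 1"
proof -
  note p = assms(1) and order_A = assms(4) and order_B = assms(5)
  define w where "w n = real (order_count B (p ^ (b - n))) / real p ^ n" for n
  define E where "E n = (\<Sum>m = 0..<d. real p ^ m *
      (real (pow_one_count A (p ^ m)) / real p ^ a) ^ (p ^ n))" for n
  interpret finite_wreath_product A B
    using assms(2,3) group.finite_carrier_if_order_prime_power[OF assms(2) p order_A]
      group.finite_carrier_if_order_prime_power[OF assms(3) p order_B]
    by (simp add: finite_wreath_product_def wreath_product_def finite_group_def finite_group_axioms_def)
  have exponent_A: "y [^]\<^bsub>A\<^esub> (p ^ d) = \<one>\<^bsub>A\<^esub>" if "y \<in> carrier A" for y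
    using A.pow_Max_ord_eq_one[OF p order_A that] assms(8) by simp
  have avg_B: "avg_order B = (\<Sum>n = 0..b. w n)"
    unfolding w_def by (rule B.avg_order_prime_power_group[OF p order_B])
  have avg_B_pos: "0 < avg_order B" by (rule B.avg_order_pos)
  have "avg_order (wreath A B) = (\<Sum>n = 0..b. w n * (real p ^ d - (real p - 1) * E n))"
    using avg_order_wreath[OF p order_A order_B exponent_A] by (simp add: w_def E_def atLeast0LessThan)
  also have "\<dots> = real p ^ d * (\<Sum>n = 0..b. w n) - (real p - 1) * (\<Sum>n = 0..b. w n * E n)"
    by (simp add: sum_subtractf sum.distrib sum_distrib_left algebra_simps)
  also have "(\<Sum>n = 0..b. w n * E n) = avg_order B * (\<Sum>n = 0..b. w n / avg_order B * E n)"
    using avg_B_pos by (simp add: sum_distrib_left)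
  finally have "avg_order (wreath A B) = real p ^ d * avg_order B
      - (real p - 1) * avg_order B * (\<Sum>n = 0..b. w n / avg_order B * E n)"
    by (simp add: avg_B)
  moreover have "(\<Sum>n = 0..b. w n / avg_order B) = 1"
    using avg_B_pos by (simp add: avg_B sum_divide_distrib[symmetric])
  ultimately show ?thesis
    using avg_B_pos unfolding Let_def w_def[symmetric] E_def[symmetric] by (simp add: w_def)
qed

end
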